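(* Let $c\in\mathbb{R}\setminus\{0\}$ and let $\boldsymbol\eta_c:\mathbb{R}^2\to\mathbb{R}^2$ be $$\boldsymbol\eta_c(u,v)=\bigl(u^2-v^2,\ -2uv+4cv\bigr).$$ Let $\mathbf y=(s_1,s_2)$ be a point in the four-image region of $\boldsymbol\eta_c$, i.e. the equation $\boldsymbol\eta_c(\mathbf x)=\mathbf y$ has exactly four distinct solutions $\mathbf x_1,\dots,\mathbf x_4\in\mathbb{R}^2$, each with $\det(\mathrm{Jac}\,\boldsymbol\eta_c)(\mathbf x_i)\neq 0$. Then the signed magnifications $\mu_i=1/\det(\mathrm{Jac}\,\boldsymbol\eta_c)(\mathbf x_i)$ satisfy $$\mu_1+\mu_2+\mu_3+\mu_4=0.$$ Explicitly, $\det(\mathrm{Jac}\,\boldsymbol\eta_c)(u,v)=8cu-4(u^2+v^2)$, so $\sum_{i=1}^4 \frac{1}{8cu_i-4(u_i^2+v_i^2)}=0$ where $\mathbf x_i=(u_i,v_i)$.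
   Context: This map is the universal quantitative form of a one-parameter family of gravitational lensing maps near an elliptic umbilic caustic. The four-image region is the bounded region enclosed by the caustic curve $s_1=2c^2\cos\phi(1+\cos\phi)$, $s_2=2c^2\sin\phi(1-\cos\phi)$, $\phi\in[0,2\pi)$; sources in its interior have exactly four preimages. *)

theory Defs
  imports "HOL-Analysis.Analysis"
begin

definition eta :: "real \<Rightarrow> real \<times> real \<Rightarrow> real \<times> real" where
  "eta c x = (fst x ^ 2 - snd x ^ 2, - 2 * fst x * snd x + 4 * c * snd x)"

definition jac_det :: "(real \<times> real \<Rightarrow> real \<times> real) \<Rightarrow> real \<times> real \<Rightarrow> real" where
  "jac_det f x =
     deriv (\<lambda>u. fst (f (u, snd x))) (fst x) * deriv (\<lambda>v. snd (f (fst x, v))) (snd x)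
   - deriv (\<lambda>v. fst (f (fst x, v))) (snd x) * deriv (\<lambda>u. snd (f (u, snd x))) (fst x)"

end

theory Submission imports Defs begin

(* Off the axis (s2 \<noteq> 0) we have v = s2/(4c - 2u), so the abscissa u of every
   preimage is a root of the resolvent quartic P(u) = (u^2 - s1)(4c - 2u)^2 - s2^2,
   and u determines the preimage.  Differentiating gives P'(u) = (4c - 2u) J(u,v),
   hence 1/J = (4c - 2u)/P'(u).  For a quartic with four distinct roots u_i,
   P'(u_i) = 4 \<Prod>_{j\<noteq>i} (u_i - u_j), and the Lagrange interpolation identity
   \<Sum>_i g(u_i) / \<Prod>_{j\<noteq>i} (u_i - u_j) = 0 for affine g gives the result.

   On the axis (s2 = 0) the four preimages are (\<plusminus>a, 0) and (2c, \<plusminus>b) with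
   a^2 + b^2 = 4c^2, and the four magnifications cancel by direct computation.

   In both cases the Jacobian is automatically nonzero at the preimages. *)

definition lens_jac :: "real \<Rightarrow> real \<times> real \<Rightarrow> real" where
  "lens_jac c x = 8 * c * fst x - 4 * (fst x ^ 2 + snd x ^ 2)"

lemma jac_det_eta: "jac_det (eta c) x = lens_jac c x"
proof -
  obtain u v where x: "x = (u, v)" by (cases x)
  have du_fst: "deriv (\<lambda>u. u^2 - v^2) u = 2 * u"
    by (rule DERIV_imp_deriv) (auto intro!: derivative_eq_intros)
  have dv_snd: "deriv (\<lambda>v. - 2 * u * v + 4 * c * v) v = - 2 * u + 4 * c"
    by (rule DERIV_imp_deriv) (auto intro!: derivative_eq_intros)
  have dv_fst: "deriv (\<lambda>v. u^2 - v^2) v = - 2 * v"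
    by (rule DERIV_imp_deriv) (auto intro!: derivative_eq_intros)
  have du_snd: "deriv (\<lambda>u. - 2 * u * v + 4 * c * v) u = - 2 * v"
    by (rule DERIV_imp_deriv) (auto intro!: derivative_eq_intros)
  show ?thesis
    unfolding jac_det_def eta_def lens_jac_def x fst_conv snd_conv du_fst dv_snd dv_fst du_snd
    by (simp add: algebra_simps power2_eq_square)
qed

lemma eta_eq_iff:
  "eta c x = (s1, s2) \<longleftrightarrow> s1 = fst x ^ 2 - snd x ^ 2 \<and> s2 = snd x * (4 * c - 2 * fst x)"
  by (auto simp: eta_def algebra_simps)

lemma card_4_obtain:
  assumes "card S = 4"
  obtains p1 p2 p3 p4 where "S = {p1, p2, p3, p4}" "distinct [p1, p2, p3, p4]"
proof -
  from assms have "card S = Suc 3" by simp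
  then obtain p1 R where R: "S = insert p1 R" "p1 \<notin> R" "card R = 3"
    by (blast dest: card_eq_SucD)
  then obtain p2 p3 p4 where "R = {p2, p3, p4}" "p2 \<noteq> p3" "p3 \<noteq> p4" "p2 \<noteq> p4"
    unfolding card_3_iff by blast
  with R show ?thesis by (intro that) auto
qed

(* Lagrange interpolation: for four distinct nodes and an affine function g,
   \<Sum>_i g(x_i) / \<Prod>_{j\<noteq>i} (x_i - x_j) = 0 (the leading coefficient of the cubic
   interpolant of g). *)
lemma lagrange_affine_sum:
  fixes a b x y z t :: real
  assumes "x \<noteq> y" "x \<noteq> z" "x \<noteq> t" "y \<noteq> z" "y \<noteq> t" "z \<noteq> t"
  shows "(a + b*x) / ((x-y)*(x-z)*(x-t)) + (a + b*y) / ((y-x)*(y-z)*(y-t))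
       + (a + b*z) / ((z-x)*(z-y)*(z-t)) + (a + b*t) / ((t-x)*(t-y)*(t-z)) = 0"
proof -
  define V where "V = (x-y)*(x-z)*(x-t)*(y-z)*(y-t)*(z-t)"
  have V: "V = ((x-y)*(x-z)*(x-t)) * ((y-z)*(y-t)*(z-t))"
          "V = ((y-x)*(y-z)*(y-t)) * (- (x-z)*(x-t)*(z-t))"
          "V = ((z-x)*(z-y)*(z-t)) * ((x-y)*(x-t)*(y-t))"
          "V = ((t-x)*(t-y)*(t-z)) * (- (x-y)*(x-z)*(y-z))"
    unfolding V_def by algebra+
  have nz: "(x-y)*(x-z)*(x-t) \<noteq> 0" "(y-x)*(y-z)*(y-t) \<noteq> 0"
           "(z-x)*(z-y)*(z-t) \<noteq> 0" "(t-x)*(t-y)*(t-z) \<noteq> 0" "V \<noteq> 0"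
    using assms by (auto simp: V_def)
  have clear: "n / d * V = n * e" if "d \<noteq> 0" "V = d * e" for n d e :: real
    using that by simp
  have "((a + b*x) / ((x-y)*(x-z)*(x-t)) + (a + b*y) / ((y-x)*(y-z)*(y-t))
       + (a + b*z) / ((z-x)*(z-y)*(z-t)) + (a + b*t) / ((t-x)*(t-y)*(t-z))) * V
      = (a + b*x) * ((y-z)*(y-t)*(z-t)) + (a + b*y) * (- (x-z)*(x-t)*(z-t))
      + (a + b*z) * ((x-y)*(x-t)*(y-t)) + (a + b*t) * (- (x-y)*(x-z)*(y-z))"
    using clear[OF nz(1) V(1)] clear[OF nz(2) V(2)] clear[OF nz(3) V(3)] clear[OF nz(4) V(4)]
    by (simp only: distrib_right[of _ _ V])
  also have "\<dots> = 0" by algebra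
  finally show ?thesis using nz(5) by simp
qed

(* Proof: the first and second
   divided differences of P over the roots vanish, which pins down the
   coefficients ka and kb in terms of the roots. *)
lemma quartic_derivative_at_root:
  fixes ka kb kc kd x y z t :: real
  assumes distinct: "x \<noteq> y" "x \<noteq> z" "x \<noteq> t" "y \<noteq> z" "y \<noteq> t" "z \<noteq> t"
    and P: "\<And>u. P u = 4*u^4 + ka*u^3 + kb*u^2 + kc*u + kd"
    and roots: "P x = 0" "P y = 0" "P z = 0" "P t = 0"
  shows "16*x^3 + 3*ka*x^2 + 2*kb*x + kc = 4*((x-y)*(x-z)*(x-t))"
proof -
  define D1 where "D1 p q = 4*(p^3 + p^2*q + p*q^2 + q^3) + ka*(p^2 + p*q + q^2) + kb*(p + q) + kc"
    for p q
  define D2 where "D2 p q r = 4*(p^2 + q^2 + r^2 + p*q + p*r + q*r) + ka*(p + q + r) + kb"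
    for p q r
  have D1_zero: "D1 p q = 0" if "P p = 0" "P q = 0" "p \<noteq> q" for p q
  proof -
    have "P p - P q = (p - q) * D1 p q" unfolding P D1_def by algebra
    with that show ?thesis by simp
  qed
  have D2_zero: "D2 p q r = 0" if "D1 p q = 0" "D1 p r = 0" "q \<noteq> r" for p q r
  proof -
    have "D1 p q - D1 p r = (q - r) * D2 p q r" unfolding D1_def D2_def by algebra
    with that show ?thesis by simp
  qed
  have xy: "D1 x y = 0" using D1_zero roots distinct by blast
  have xyz: "D2 x y z = 0" using D2_zero D1_zero roots distinct by blast
  have xyt: "D2 x y t = 0" using D2_zero D1_zero roots distinct by blast
  have "D2 x y z - D2 x y t = (z - t) * (4*(x + y + z + t) + ka)" unfolding D2_def by algebra
  with xyz xyt distinct have vieta: "4*(x + y + z + t) + ka = 0" by simp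
  show ?thesis using vieta xyz xy roots(1) unfolding D2_def D1_def P by algebra
qed

(* The resolvent quartic whose roots are the abscissae of the preimages of (s1, s2). *)
definition resolvent :: "real \<Rightarrow> real \<Rightarrow> real \<Rightarrow> real \<Rightarrow> real" where
  "resolvent c s1 s2 u = (u^2 - s1) * (4*c - 2*u)^2 - s2^2"

lemma resolvent_expand:
  "resolvent c s1 s2 u
     = 4*u^4 + (-16*c)*u^3 + (16*c^2 - 4 * s1)*u^2 + (16*c * s1)*u + (-16*c^2 * s1 - s2^2)"
  unfolding resolvent_def by algebra

(* Multiplying u^2 - s1 = v^2 by (4c - 2u)^2 and using v (4c - 2u) = s2. *)
lemma resolvent_root:
  assumes "eta c x = (s1, s2)"
  shows "resolvent c s1 s2 (fst x) = 0"
  using assms unfolding eta_eq_iff resolvent_def by (elim conjE) algebra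

(* P'(u) = (4c - 2u) J(u, v) at every preimage (u, v): the derivative of the
   resolvent, written with the coefficients of resolvent_expand. *)
lemma resolvent_derivative:
  assumes "eta c x = (s1, s2)"
  shows "16*fst x^3 + 3*(-16*c)*fst x^2 + 2*(16*c^2 - 4 * s1)*fst x + 16*c * s1
           = (4*c - 2*fst x) * lens_jac c x"
  using assms unfolding eta_eq_iff lens_jac_def by (elim conjE) algebra

lemma preimage_eq_by_fst:
  assumes "s2 \<noteq> 0" "eta c x = (s1, s2)" "eta c x' = (s1, s2)" "fst x = fst x'"
  shows "x = x'"
proof -
  have "snd x * (4*c - 2*fst x) = snd x' * (4*c - 2*fst x)" "4*c - 2*fst x \<noteq> 0"
    using assms unfolding eta_eq_iff by auto
  then have "snd x = snd x'" by simp
  with assms(4) show ?thesis by (simp add: prod_eq_iff)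
qed

lemma inv_lens_jac_off_axis:
  assumes "s2 \<noteq> 0" "eta c x = (s1, s2)"
    and distinct: "fst x \<noteq> y" "fst x \<noteq> z" "fst x \<noteq> t" "y \<noteq> z" "y \<noteq> t" "z \<noteq> t"
    and roots: "resolvent c s1 s2 y = 0" "resolvent c s1 s2 z = 0" "resolvent c s1 s2 t = 0"
  shows "1 / lens_jac c x = (c + (-1/2) * fst x) / ((fst x - y) * (fst x - z) * (fst x - t))"
proof -
  define Q where "Q = (fst x - y) * (fst x - z) * (fst x - t)"
  have Q: "Q \<noteq> 0" using distinct by (simp add: Q_def)
  have w: "4*c - 2*fst x \<noteq> 0" using assms(1,2) unfolding eta_eq_iff by auto
  have eq: "(4*c - 2*fst x) * lens_jac c x = 4 * Q"
    unfolding resolvent_derivative[OF assms(2), symmetric] Q_def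
    by (rule quartic_derivative_at_root[where P = "resolvent c s1 s2"])
       (use distinct roots resolvent_root[OF assms(2)] resolvent_expand in auto)
  have "lens_jac c x \<noteq> 0" using eq Q by auto
  then have "1 / lens_jac c x = (4*c - 2*fst x) / (4 * Q)" using w by (simp add: eq[symmetric])
  also have "\<dots> = (c + (-1/2) * fst x) / Q" using Q by (simp add: field_simps)
  finally show ?thesis unfolding Q_def .
qed

(* Off the axis the four magnifications are the Lagrange weights of the affine
   function c - u/2 at the four distinct abscissae, so they sum to zero. *)
lemma magnification_sum_off_axis:
  assumes "s2 \<noteq> 0" "card {x. eta c x = (s1, s2)} = 4"
  shows "(\<Sum>x \<in> {x. eta c x = (s1, s2)}. 1 / lens_jac c x) = 0"
proof -
  obtain p1 p2 p3 p4 where S: "{x. eta c x = (s1, s2)} = {p1, p2, p3, p4}"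
    and dist: "distinct [p1, p2, p3, p4]"
    using card_4_obtain[OF assms(2)] by blast
  have pre: "eta c p = (s1, s2)" if "p \<in> {p1, p2, p3, p4}" for p
    using that S by blast
  have fst_dist: "fst p \<noteq> fst q" if "p \<in> {p1, p2, p3, p4}" "q \<in> {p1, p2, p3, p4}" "p \<noteq> q" for p q
    using preimage_eq_by_fst[OF assms(1) pre pre] that by blast
  have weight: "1 / lens_jac c p
      = (c + (-1/2) * fst p) / ((fst p - fst q) * (fst p - fst r) * (fst p - fst r'))"
    if "distinct [p, q, r, r']" "{p, q, r, r'} = {p1, p2, p3, p4}" for p q r r'
  proof -
    have mem: "p \<in> {p1, p2, p3, p4}" "q \<in> {p1, p2, p3, p4}"
      "r \<in> {p1, p2, p3, p4}" "r' \<in> {p1, p2, p3, p4}"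
      using that(2) by blast+
    have "p \<noteq> q" "p \<noteq> r" "p \<noteq> r'" "q \<noteq> r" "q \<noteq> r'" "r \<noteq> r'"
      using that(1) by auto
    with mem show ?thesis
      by (intro inv_lens_jac_off_axis[OF assms(1) pre] fst_dist resolvent_root[OF pre])
  qed
  have fst_p: "fst p1 \<noteq> fst p2" "fst p1 \<noteq> fst p3" "fst p1 \<noteq> fst p4"
    "fst p2 \<noteq> fst p3" "fst p2 \<noteq> fst p4" "fst p3 \<noteq> fst p4"
    using dist by (simp_all add: fst_dist)
  have reorder:
    "distinct [p2, p1, p3, p4]" "{p2, p1, p3, p4} = {p1, p2, p3, p4}"
    "distinct [p3, p1, p2, p4]" "{p3, p1, p2, p4} = {p1, p2, p3, p4}"
    "distinct [p4, p1, p2, p3]" "{p4, p1, p2, p3} = {p1, p2, p3, p4}"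
    using dist by auto
  have "(\<Sum>x \<in> {p1, p2, p3, p4}. 1 / lens_jac c x)
      = 1 / lens_jac c p1 + 1 / lens_jac c p2 + 1 / lens_jac c p3 + 1 / lens_jac c p4"
    using dist by (simp add: add.assoc)
  also have "\<dots> = 0"
    unfolding weight[OF dist refl] weight[OF reorder(1,2)] weight[OF reorder(3,4)] weight[OF reorder(5,6)]
    by (rule lagrange_affine_sum[OF fst_p])
  finally show ?thesis unfolding S .
qed

lemma preimages_on_axis:
  "{x. eta c x = (s1, 0)}
     \<subseteq> {(sqrt s1, 0), (- sqrt s1, 0), (2*c, sqrt (4*c^2 - s1)), (2*c, - sqrt (4*c^2 - s1))}"
proof
  fix x assume "x \<in> {x. eta c x = (s1, 0)}"
  then have s1: "s1 = fst x ^ 2 - snd x ^ 2" and "snd x * (4*c - 2*fst x) = 0"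
    by (simp_all add: eta_eq_iff)
  then consider "snd x = 0" | "fst x = 2*c" by auto
  then show "x \<in> {(sqrt s1, 0), (- sqrt s1, 0), (2*c, sqrt (4*c^2 - s1)), (2*c, - sqrt (4*c^2 - s1))}"
  proof cases
    case 1
    then have "sqrt s1 = \<bar>fst x\<bar>" using s1 by simp
    with 1 show ?thesis by (cases x) (auto simp: abs_if)
  next
    case 2
    then have "sqrt (4*c^2 - s1) = \<bar>snd x\<bar>" using s1 by (simp add: power_mult_distrib)
    with 2 show ?thesis by (cases x) (auto simp: abs_if)
  qed
qed

(* The four on-axis magnifications cancel: the two on the u-axis sum to 1/(2b^2),
   the two on the line u = 2c are each -1/(4b^2). *)
lemma axis_magnifications_cancel:
  fixes a b c :: real
  assumes "a \<noteq> 0" "b \<noteq> 0" "a^2 + b^2 = 4*c^2"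
  shows "1 / lens_jac c (a, 0) + 1 / lens_jac c (- a, 0)
       + 1 / lens_jac c (2*c, b) + 1 / lens_jac c (2*c, - b) = 0"
proof -
  have prod: "(2*c - a) * (2*c + a) = b^2" using assms(3) by algebra
  then have nz: "2*c - a \<noteq> 0" "2*c + a \<noteq> 0" using assms(2) by auto
  have J: "lens_jac c (a, 0) = 4*a*(2*c - a)" "lens_jac c (- a, 0) = - 4*a*(2*c + a)"
          "lens_jac c (2*c, b) = - 4*b^2" "lens_jac c (2*c, - b) = - 4*b^2"
    unfolding lens_jac_def by (simp_all add: algebra_simps power2_eq_square)
  have pair: "1 / (4*a*p) + 1 / (- 4*a*q) = (q - p) / (4*a*(p*q))"
    if "p \<noteq> 0" "q \<noteq> 0" for p q :: real
    using that assms(1) by (simp add: field_simps)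
  have "1 / (4*a*(2*c - a)) + 1 / (- 4*a*(2*c + a)) = 1 / (2*b^2)"
    unfolding pair[OF nz] prod using assms(1) by simp
  then show ?thesis unfolding J by simp
qed

(* On the axis the preimage set is forced to be the full candidate set of
   preimages_on_axis, and four distinct candidates need a, b \<noteq> 0. *)
lemma magnification_sum_on_axis:
  assumes "card {x. eta c x = (s1, 0)} = 4"
  shows "(\<Sum>x \<in> {x. eta c x = (s1, 0)}. 1 / lens_jac c x) = 0"
proof -
  define a where "a = sqrt s1"
  define b where "b = sqrt (4*c^2 - s1)"
  define T where "T = {(a, 0), (- a, 0), (2*c, b), (2*c, - b)}"
  have "card T \<le> 4" unfolding T_def by (auto simp: card_insert_if)
  then have S: "{x. eta c x = (s1, 0)} = T"
    using assms preimages_on_axis[of c s1] by (intro card_seteq) (auto simp: T_def a_def b_def)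
  then have "card T = 4" using assms by simp
  have card3: "card {p, q, r} \<le> 3" for p q r :: "real \<times> real"
    by (simp add: card_insert_if)
  have "a \<noteq> 0 \<and> b \<noteq> 0"
  proof (rule ccontr)
    assume "\<not> (a \<noteq> 0 \<and> b \<noteq> 0)"
    then have "T = {(0, 0), (2*c, b), (2*c, - b)} \<or> T = {(a, 0), (- a, 0), (2*c, 0)}"
      by (auto simp: T_def)
    then have "card T \<le> 3" using card3 by auto
    with \<open>card T = 4\<close> show False by simp
  qed
  then have ab: "a \<noteq> 0" "b \<noteq> 0" by simp_all
  have "eta c (a, 0) = (s1, 0)" "eta c (2*c, b) = (s1, 0)" using S T_def by blast+
  then have "a^2 + b^2 = 4*c^2" unfolding eta_eq_iff by simp
  have "(\<Sum>x \<in> T. 1 / lens_jac c x) = 1 / lens_jac c (a, 0) + 1 / lens_jac c (- a, 0)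
       + 1 / lens_jac c (2*c, b) + 1 / lens_jac c (2*c, - b)"
    using ab by (simp add: T_def add.assoc)
  also have "\<dots> = 0" using ab \<open>a^2 + b^2 = 4*c^2\<close> by (rule axis_magnifications_cancel)
  finally show ?thesis unfolding S .
qed

theorem theorem1:
  fixes c s1 s2 :: real
  assumes "c \<noteq> 0"
    and "card {x. eta c x = (s1, s2)} = 4"
    and "\<forall>x \<in> {x. eta c x = (s1, s2)}. jac_det (eta c) x \<noteq> 0"
  shows "(\<Sum>x \<in> {x. eta c x = (s1, s2)}. 1 / jac_det (eta c) x) = 0"
proof -
  (* Only the four-image hypothesis is needed; see the opening comment. *)
  have "(\<Sum>x \<in> {x. eta c x = (s1, s2)}. 1 / lens_jac c x) = 0"
  proof (cases "s2 = 0")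
    case True
    then show ?thesis using magnification_sum_on_axis assms(2) by simp
  next
    case False
    then show ?thesis using magnification_sum_off_axis assms(2) by simp
  qed
  then show ?thesis by (simp add: jac_det_eta)
qed

end
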